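(* The LP fractional mechanism has approximation ratio $1$ for the fractional scheduling problem without money, for any number $n$ of machines and any number $m$ of tasks.
   Context: Fractional scheduling without payments: $n$ machines, $m$ divisible tasks; machine $i$ has private true times $t_{i,j}\ge0$ and declares $\hat t_{i,j}\ge0$. A mechanism outputs fractions $\alpha_{i,j}(\hat{\mathbf t})\in[0,1]$ with $\sum_i\alpha_{i,j}=1$ for every task $j$. Machines are bound by their declarations: machine $i$ executes her fraction of task $j$ for time $\alpha_{i,j}\max\{\hat t_{i,j},t_{i,j}\}$; her cost is $C_i(\hat{\mathbf t})=\sum_j\alpha_{i,j}\max\{\hat t_{i,j},t_{i,j}\}$, and the (fractional) makespan is $\max_i C_i(\hat{\mathbf t})$. A mechanism is truthful if for every $\mathbf t$, $i$, $\hat{\mathbf t}$: $C_i(\mathbf t_i,\hat{\mathbf t}_{-i})\le C_i(\hat{\mathbf t})$. The approximation ratio of a truthful mechanism is the supremum over instances $\mathbf t$ of the makespan under truthful reports $\hat{\mathbf t}=\mathbf t$ divided by the optimal fractional makespan $\min_\alpha\max_i\sum_j\alpha_{i,j}t_{i,j}$. The LP fractional mechanism, on declarations $\hat{\mathbf t}$, outputs as fractions an optimal solution $\alpha(\hat{\mathbf t})$ (selected by a fixed rule among optimal solutions) of the linear program: minimize $\mu$ subject to $\sum_i\alpha_{i,j}=1$ for all $j$, $\mu-\sum_j\alpha_{i,j}\hat t_{i,j}\ge0$ for all $i$, $\alpha_{i,j}\ge0$. *)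

theory Defs
  imports Complex_Main
begin

text \<open>Machines are indexed by i < n, tasks by j < m. A time matrix (true or declared)
  is a function nat \<Rightarrow> nat \<Rightarrow> real; only entries with i < n, j < m matter.\<close>

definition valid_times :: "nat \<Rightarrow> nat \<Rightarrow> (nat \<Rightarrow> nat \<Rightarrow> real) \<Rightarrow> bool" where
  "valid_times n m t \<longleftrightarrow> (\<forall>i<n. \<forall>j<m. t i j \<ge> 0)"

definition feasible_frac :: "nat \<Rightarrow> nat \<Rightarrow> (nat \<Rightarrow> nat \<Rightarrow> real) \<Rightarrow> bool" where
  "feasible_frac n m \<alpha> \<longleftrightarrow>
     (\<forall>i<n. \<forall>j<m. 0 \<le> \<alpha> i j \<and> \<alpha> i j \<le> 1) \<and> (\<forall>j<m. (\<Sum>i<n. \<alpha> i j) = 1)"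

definition frac_makespan :: "nat \<Rightarrow> nat \<Rightarrow> (nat \<Rightarrow> nat \<Rightarrow> real) \<Rightarrow> (nat \<Rightarrow> nat \<Rightarrow> real) \<Rightarrow> real" where
  "frac_makespan n m t \<alpha> = Max ((\<lambda>i. \<Sum>j<m. \<alpha> i j * t i j) ` {..<n})"

definition opt_frac :: "nat \<Rightarrow> nat \<Rightarrow> (nat \<Rightarrow> nat \<Rightarrow> real) \<Rightarrow> real" where
  "opt_frac n m t = Inf {frac_makespan n m t \<alpha> | \<alpha>. feasible_frac n m \<alpha>}"

text \<open>An optimal solution of the LP (min mu s.t. sum_i alpha_ij = 1, mu \<ge> sum_j alpha_ij t_ij,
  alpha \<ge> 0): its optimal mu is the max load, so optimality of (alpha, mu) means alpha is
  feasible and its makespan equals the LP optimum.\<close>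
definition LP_optimal :: "nat \<Rightarrow> nat \<Rightarrow> (nat \<Rightarrow> nat \<Rightarrow> real) \<Rightarrow> (nat \<Rightarrow> nat \<Rightarrow> real) \<Rightarrow> bool" where
  "LP_optimal n m t \<alpha> \<longleftrightarrow> feasible_frac n m \<alpha> \<and> frac_makespan n m t \<alpha> = opt_frac n m t"

text \<open>It is an LP fractional
  mechanism if on every (nonnegative) declaration it outputs an optimal LP solution; the fixed
  selection rule among optimal solutions is the mechanism function itself (arbitrary).\<close>
definition LP_fractional_mechanism ::
  "nat \<Rightarrow> nat \<Rightarrow> ((nat \<Rightarrow> nat \<Rightarrow> real) \<Rightarrow> (nat \<Rightarrow> nat \<Rightarrow> real)) \<Rightarrow> bool" where
  "LP_fractional_mechanism n m A \<longleftrightarrow> (\<forall>th. valid_times n m th \<longrightarrow> LP_optimal n m th (A th))"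

definition mech_cost ::
  "nat \<Rightarrow> ((nat \<Rightarrow> nat \<Rightarrow> real) \<Rightarrow> (nat \<Rightarrow> nat \<Rightarrow> real)) \<Rightarrow> (nat \<Rightarrow> nat \<Rightarrow> real)
     \<Rightarrow> (nat \<Rightarrow> nat \<Rightarrow> real) \<Rightarrow> nat \<Rightarrow> real" where
  "mech_cost m A t th i = (\<Sum>j<m. A th i j * max (th i j) (t i j))"

definition mech_makespan ::
  "nat \<Rightarrow> nat \<Rightarrow> ((nat \<Rightarrow> nat \<Rightarrow> real) \<Rightarrow> (nat \<Rightarrow> nat \<Rightarrow> real)) \<Rightarrow> (nat \<Rightarrow> nat \<Rightarrow> real)
     \<Rightarrow> (nat \<Rightarrow> nat \<Rightarrow> real) \<Rightarrow> real" where
  "mech_makespan n m A t th = Max (mech_cost m A t th ` {..<n})"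

text \<open>Approximation ratio: supremum over instances t of makespan under truthful reports
  divided by the optimal fractional makespan (instances with optimum 0 excluded, 0/0).\<close>
definition approx_ratio ::
  "nat \<Rightarrow> nat \<Rightarrow> ((nat \<Rightarrow> nat \<Rightarrow> real) \<Rightarrow> (nat \<Rightarrow> nat \<Rightarrow> real)) \<Rightarrow> real" where
  "approx_ratio n m A =
     Sup {mech_makespan n m A t t / opt_frac n m t | t. valid_times n m t \<and> opt_frac n m t > 0}"

end

theory Submission
  imports Defs
begin

text \<open>Under truthful reports a machine's cost is exactly its LP load, so the truthful makespan
  of the LP mechanism is the LP optimum, i.e. the optimal fractional makespan, and every ratio in
  the supremum equals 1. The supremum ranges over a nonempty set because unit times have
  optimum at least m/n > 0: the maximal load dominates the average load.\<close>

lemma mech_makespan_truthful: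
  "mech_makespan n m A t t = frac_makespan n m t (A t)"
  unfolding mech_makespan_def frac_makespan_def mech_cost_def by simp

lemma LP_fractional_mechanism_makespan_eq_opt:
  assumes "LP_fractional_mechanism n m A" and "valid_times n m t"
  shows "mech_makespan n m A t t = opt_frac n m t"
proof -
  have "LP_optimal n m t (A t)"
    using assms unfolding LP_fractional_mechanism_def by blast
  then show ?thesis
    unfolding mech_makespan_truthful LP_optimal_def by blast
qed

lemma total_load_le_frac_makespan:
  "(\<Sum>i<n. \<Sum>j<m. \<alpha> i j * t i j) \<le> real n * frac_makespan n m t \<alpha>"
proof -
  have "(\<Sum>i<n. \<Sum>j<m. \<alpha> i j * t i j) \<le> (\<Sum>i<n. frac_makespan n m t \<alpha>)"
    unfolding frac_makespan_def by (intro sum_mono Max_ge) auto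
  then show ?thesis by simp
qed

lemma feasible_frac_first_machine:
  assumes "0 < n"
  shows "feasible_frac n m (\<lambda>i j. if i = 0 then 1 else 0)"
  using assms unfolding feasible_frac_def by (simp add: sum.delta)

lemma opt_frac_unit_times_ge:
  assumes "0 < n"
  shows "real m / real n \<le> opt_frac n m (\<lambda>i j. 1)"
  unfolding opt_frac_def
proof (rule cInf_greatest)
  show "{frac_makespan n m (\<lambda>i j. 1) \<alpha> | \<alpha>. feasible_frac n m \<alpha>} \<noteq> {}"
    using feasible_frac_first_machine[OF assms] by blast
next
  fix x
  assume "x \<in> {frac_makespan n m (\<lambda>i j. 1) \<alpha> | \<alpha>. feasible_frac n m \<alpha>}"
  then obtain \<alpha> where \<alpha>: "feasible_frac n m \<alpha>" and x: "x = frac_makespan n m (\<lambda>i j. 1) \<alpha>"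
    by blast
  have "real m = (\<Sum>j<m. \<Sum>i<n. \<alpha> i j)"
    using \<alpha> unfolding feasible_frac_def by simp
  also have "\<dots> = (\<Sum>i<n. \<Sum>j<m. \<alpha> i j * 1)"
    by (simp add: sum.swap[of _ "{..<m}"])
  also have "\<dots> \<le> real n * x"
    unfolding x by (rule total_load_le_frac_makespan)
  finally show "real m / real n \<le> x"
    using assms by (simp add: divide_le_eq mult.commute)
qed

theorem theorem5:
  fixes n m :: nat
    and A :: "(nat \<Rightarrow> nat \<Rightarrow> real) \<Rightarrow> (nat \<Rightarrow> nat \<Rightarrow> real)"
  assumes "n \<ge> 1" and "m \<ge> 1"
    and "LP_fractional_mechanism n m A"
  shows "approx_ratio n m A = 1"
proof -
  let ?unit = "\<lambda>i j. 1 :: real"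
  have unit_valid: "valid_times n m ?unit"
    unfolding valid_times_def by simp
  have n_pos: "0 < n"
    using assms(1) by simp
  have "0 < real m / real n"
    using assms(1,2) by simp
  then have unit_pos: "0 < opt_frac n m ?unit"
    using opt_frac_unit_times_ge[OF n_pos, of m] by linarith
  have ratio_one: "mech_makespan n m A t t / opt_frac n m t = 1"
    if "valid_times n m t" and "opt_frac n m t > 0" for t
    using LP_fractional_mechanism_makespan_eq_opt[OF assms(3) that(1)] that(2) by simp
  have "{mech_makespan n m A t t / opt_frac n m t | t. valid_times n m t \<and> opt_frac n m t > 0}
        = {1}" (is "?ratios = _")
  proof
    show "?ratios \<subseteq> {1}"
      using ratio_one by blast
    show "{1} \<subseteq> ?ratios"
      using ratio_one[OF unit_valid unit_pos] unit_valid unit_pos by (auto intro!: exI[of _ ?unit])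
  qed
  then show ?thesis
    unfolding approx_ratio_def by simp
qed

end
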